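(* Assume (A1) and (A4). Consider Algorithm 2 with parameter choice (P1), and any inner iteration $k$ of any stage $s$. Set $\mu^k=\nabla\hat F_{i_k}(x^k)+A^T\lambda^{k+1}$. Then $x^{k+1}=x^k-\eta_sG_k^{-1}\mu^k$, and $$-2\eta_s\langle\mu^k,x^k-x^*\rangle+\eta_s^2\|\mu^k\|_{G_k^{-1}}^2\le-2\eta_s\big(F(x^{k+1})-F(x^* )\big)-2\eta_s\langle\nabla\hat F_{i_k}(x^k)-\nabla F(x^k),x^{k+1}-x^*\rangle+2\eta_s\langle A^T\lambda^{k+1},x^*-x^{k+1}\rangle.$$
   Context: Standing setup. Let $n,m,p,q,r,l\ge1$. For $j\in\{1,\dots,m\}$ let $g_j:\mathbb R^q\to\mathbb R^r$ be continuously differentiable with Jacobian $\partial g_j(x)\in\mathbb R^{r\times q}$; for $i\in\{1,\dots,n\}$ let $f_i:\mathbb R^r\to\mathbb R$ be continuously differentiable. Set $g(x)=\frac1m\sum_{j=1}^m g_j(x)$, $F_i(x)=f_i(g(x))$, $F(x)=\frac1n\sum_{i=1}^nF_i(x)$. Let $R:\mathbb R^l\to\mathbb R$ be closed convex, $A\in\mathbb R^{p\times q}$, $B\in\mathbb R^{p\times l}$; the problem is $\min_{x,\omega}F(x)+R(\omega)$ s.t. $Ax+B\omega=0$, with optimal primal–dual solution $(x^*,\omega^*,\lambda^* )$. $\|\cdot\|$ is the Euclidean norm; for positive definite $H$, $\|x\|_H^2=x^THx$. Assumptions. (A1) Each $F_i$ is convex, $R$ is convex, an optimal primal–dual solution exists,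 and all $x$-points arising lie in a bounded set. (A4) There is $L_F>0$ with $\|(\partial g_j(x))^T\nabla f_i(g(x))-(\partial g_j(y))^T\nabla f_i(g(y))\|\le L_F\|x-y\|$ for all $i,j,x,y$. Algorithm 2 (inputs: integers $S,K\ge1$, $\rho>0$, stepsizes $\eta_s>0$, matrices $G_k$ per stage as below; initial $\tilde x^0=\hat x^0$, $\hat\omega^0$, $\hat\lambda^0$, $\hat G^0=I$). For $s=1,\dots,S$: set $\tilde x=\tilde x^{s-1}$, $x^0=\hat x^{s-1}$, $\omega^0=\hat\omega^{s-1}$, $\lambda^0=\hat\lambda^{s-1}$, $G_0=\hat G^{s-1}$; compute $g(\tilde x)$, $\nabla F(\tilde x)$. For $k=0,\dots,K-1$: (a) $\omega^{k+1}\in\arg\min_\omega R(\omega)+\langle\lambda^k,B\omega\rangle+\frac\rho2\|Ax^k+B\omega\|^2$; (b) compute $g(x^k)$ exactly; (c) draw $i_k$ uniform on $\{1,\dots,n\}$ and $j_k$ uniform on $\{1,\dots,m\}$, independently, and set $\nabla\hat F_{i_k}(x^k)=(\partial g_{j_k}(x^k))^T\nabla f_{i_k}(g(x^k))-(\partial g_{j_k}(\tilde x))^T\nabla f_{i_k}(g(\tilde x))+\nabla F(\tilde x)$; (d) $x^{k+1}=\arg\min_x\langle\nabla\hat F_{i_k}(x^k),x-x^k\rangle+\langle\lambda^k,Ax\rangle+\frac\rho2\|Ax+B\omega^{k+1}\|^2+\frac1{2\eta_s}\|x-x^k\|_{G_k}^2$; (e) $\lambda^{k+1}=\lambda^k+\rho(Ax^{k+1}+B\omega^{k+1})$.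 End of stage $s$: $\tilde x^s=\frac1K\sum_{k=1}^Kx^k$, $\tilde\omega^s=\frac1K\sum_{k=1}^K\omega^k$, $\hat x^s=x^K$, $\hat\omega^s=\omega^K$, $\hat\lambda^s=\lambda^K$, $\hat G^s=G_K$. Parameter choice (P1): $\eta_s=\frac1{(s+1)L_F}$, and in stage $s$ the matrices $G_0,\dots,G_K$ are scalar multiples of the identity with $\frac1sI=G_0\succeq G_1\succeq\dots\succeq G_{K-1}=G_K=\frac1{s+1}I$. *)

theory Defs
  imports "HOL-Analysis.Analysis"
begin

definition gavg :: "nat \<Rightarrow> (nat \<Rightarrow> real^'q \<Rightarrow> real^'r) \<Rightarrow> real^'q \<Rightarrow> real^'r" where
  "gavg m g x = (1 / real m) *\<^sub>R (\<Sum>j = 1..m. g j x)"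

definition Fobj :: "nat \<Rightarrow> nat \<Rightarrow> (nat \<Rightarrow> real^'r \<Rightarrow> real) \<Rightarrow> (nat \<Rightarrow> real^'q \<Rightarrow> real^'r)
    \<Rightarrow> real^'q \<Rightarrow> real" where
  "Fobj n m f g x = (1 / real n) * (\<Sum>i = 1..n. f i (gavg m g x))"

text \<open>Gradient of F by the chain rule:
  (1/n) sum_i (1/m) sum_j (dg_j(x))^T grad f_i(g(x)).\<close>
definition gradF :: "nat \<Rightarrow> nat \<Rightarrow> (nat \<Rightarrow> real^'r \<Rightarrow> real^'r) \<Rightarrow> (nat \<Rightarrow> real^'q \<Rightarrow> real^'r)
    \<Rightarrow> (nat \<Rightarrow> real^'q \<Rightarrow> real^'q^'r) \<Rightarrow> real^'q \<Rightarrow> real^'q" where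
  "gradF n m Df g Dg x = (1 / real n) *\<^sub>R (\<Sum>i = 1..n. (1 / real m) *\<^sub>R
      (\<Sum>j = 1..m. transpose (Dg j x) *v Df i (gavg m g x)))"

text \<open>Variance-reduced stochastic gradient of step (c), with sampled indices i, j,
  snapshot point xt and current point x.\<close>
definition gradest :: "nat \<Rightarrow> nat \<Rightarrow> (nat \<Rightarrow> real^'r \<Rightarrow> real^'r) \<Rightarrow> (nat \<Rightarrow> real^'q \<Rightarrow> real^'r)
    \<Rightarrow> (nat \<Rightarrow> real^'q \<Rightarrow> real^'q^'r) \<Rightarrow> nat \<Rightarrow> nat \<Rightarrow> real^'q \<Rightarrow> real^'q \<Rightarrow> real^'q" where
  "gradest n m Df g Dg i j xt x =
     transpose (Dg j x) *v Df i (gavg m g x) - transpose (Dg j xt) *v Df i (gavg m g xt)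
     + gradF n m Df g Dg xt"

definition wnorm2 :: "real^'q^'q \<Rightarrow> real^'q \<Rightarrow> real" where
  "wnorm2 H v = v \<bullet> (H *v v)"

text \<open>Lagrangian of  min F(x) + R(w)  s.t.  Ax + Bw = 0.\<close>
definition lagr :: "(real^'q \<Rightarrow> real) \<Rightarrow> (real^'l \<Rightarrow> real) \<Rightarrow> real^'q^'p \<Rightarrow> real^'l^'p
    \<Rightarrow> real^'q \<Rightarrow> real^'l \<Rightarrow> real^'p \<Rightarrow> real" where
  "lagr F R A B x w y = F x + R w + y \<bullet> (A *v x + B *v w)"

definition opt_pd :: "(real^'q \<Rightarrow> real) \<Rightarrow> (real^'l \<Rightarrow> real) \<Rightarrow> real^'q^'p \<Rightarrow> real^'l^'p
    \<Rightarrow> real^'q \<Rightarrow> real^'l \<Rightarrow> real^'p \<Rightarrow> bool" where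
  "opt_pd F R A B xs ws ys \<longleftrightarrow>
     (\<forall>y. lagr F R A B xs ws y \<le> lagr F R A B xs ws ys) \<and>
     (\<forall>x w. lagr F R A B xs ws ys \<le> lagr F R A B x w ys)"

end

theory Submission
  imports Defs
begin

text \<open>
  Step (d) minimises a linear function plus a quadratic with Hessian
  \<open>\<rho> A\<^sup>T A + (\<gamma>/\<eta>) I\<close>, so its minimiser is characterised by a vanishing gradient;
  together with the multiplier update (e) this gives
  \<open>\<mu>\<^sup>k = (\<gamma>/\<eta>) (x\<^sup>k - x\<^sup>k\<^sup>+\<^sup>1)\<close>, where \<open>G\<^sub>k = \<gamma> I\<close>.
  The inequality then follows from the descent lemma for the \<open>L\<^sub>F\<close>-smooth \<open>F\<close> at
  \<open>x\<^sup>k\<close>, the tangent inequality for the convex \<open>F\<close> at \<open>x\<^sup>k\<close>, and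
  \<open>\<eta>\<^sub>s L\<^sub>F = 1/(s+1) \<le> \<gamma>\<close>, which absorbs the curvature term \<open>L\<^sub>F/2 \<parallel>x\<^sup>k\<^sup>+\<^sup>1 - x\<^sup>k\<parallel>\<^sup>2\<close>.
\<close>

subsection \<open>Convex and smooth real functions\<close>

lemma convex_on_sum_fun:
  assumes "finite I" "convex S" "\<And>i. i \<in> I \<Longrightarrow> convex_on S (f i)"
  shows "convex_on S (\<lambda>x. \<Sum>i\<in>I. f i x)"
  using assms by (induction I rule: finite_induct) (auto simp: convex_on_const)

lemma convex_on_ge_linearization:
  fixes h :: "'a::real_inner \<Rightarrow> real"
  assumes convex: "convex_on UNIV h" and deriv: "(h has_derivative (\<lambda>v. D \<bullet> v)) (at x)"
  shows "h x + D \<bullet> (z - x) \<le> h z"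
proof -
  define \<psi> where "\<psi> t = h (x + t *\<^sub>R (z - x))" for t :: real
  have "convex_on UNIV \<psi>"
  proof (rule convex_onI)
    fix t u v :: real assume "0 < t" "t < 1"
    have "x + ((1 - t) *\<^sub>R u + t *\<^sub>R v) *\<^sub>R (z - x)
        = (1 - t) *\<^sub>R (x + u *\<^sub>R (z - x)) + t *\<^sub>R (x + v *\<^sub>R (z - x))"
      by (simp add: algebra_simps)
    then show "\<psi> ((1 - t) *\<^sub>R u + t *\<^sub>R v) \<le> (1 - t) * \<psi> u + t * \<psi> v"
      unfolding \<psi>_def using convex_onD[OF convex, of t] \<open>0 < t\<close> \<open>t < 1\<close> by simp
  qed simp
  moreover have "(\<psi> has_real_derivative D \<bullet> (z - x)) (at 0)"
  proof -
    have "((\<lambda>t. x + t *\<^sub>R (z - x)) has_derivative (\<lambda>t. t *\<^sub>R (z - x))) (at 0)"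
      by (auto intro!: derivative_eq_intros)
    from has_derivative_compose[OF this, of h "\<lambda>v. D \<bullet> v"] deriv
    have "(\<psi> has_derivative (\<lambda>t. D \<bullet> (t *\<^sub>R (z - x)))) (at 0)"
      unfolding \<psi>_def by simp
    then show ?thesis
      by (simp add: has_field_derivative_def mult.commute[of _ "D \<bullet> (z - x)"])
  qed
  ultimately show ?thesis
    using convex_on_imp_above_tangent[of UNIV \<psi> 0 1 "D \<bullet> (z - x)"] by (simp add: \<psi>_def)
qed

lemma lipschitz_gradient_descent_lemma:
  fixes h :: "'a::real_inner \<Rightarrow> real" and Dh :: "'a \<Rightarrow> 'a"
  assumes deriv: "\<And>y. (h has_derivative (\<lambda>v. Dh y \<bullet> v)) (at y)"
    and lipschitz: "\<And>y z. norm (Dh y - Dh z) \<le> L * norm (y - z)"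
  shows "h y \<le> h x + Dh x \<bullet> (y - x) + L / 2 * (norm (y - x))\<^sup>2"
proof -
  define d where "d = y - x"
  define \<phi> where "\<phi> t = h (x + t *\<^sub>R d) - t * (Dh x \<bullet> d) - L / 2 * t\<^sup>2 * (norm d)\<^sup>2" for t :: real
  have "\<phi> 1 \<le> \<phi> 0"
  proof (rule DERIV_nonpos_imp_nonincreasing[where f = \<phi>])
    fix t :: real assume t: "0 \<le> t" "t \<le> 1"
    have "((\<lambda>t. x + t *\<^sub>R d) has_derivative (\<lambda>t. t *\<^sub>R d)) (at t)"
      by (auto intro!: derivative_eq_intros)
    from has_derivative_compose[OF this deriv]
    have "((\<lambda>t. h (x + t *\<^sub>R d)) has_real_derivative Dh (x + t *\<^sub>R d) \<bullet> d) (at t)"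
      by (simp add: has_field_derivative_def mult.commute[of _ "Dh (x + t *\<^sub>R d) \<bullet> d"])
    then have "(\<phi> has_real_derivative (Dh (x + t *\<^sub>R d) - Dh x) \<bullet> d - L * t * (norm d)\<^sup>2) (at t)"
      unfolding \<phi>_def by (auto intro!: derivative_eq_intros simp: inner_diff_left)
    moreover have "(Dh (x + t *\<^sub>R d) - Dh x) \<bullet> d \<le> L * t * (norm d)\<^sup>2"
    proof -
      have "(Dh (x + t *\<^sub>R d) - Dh x) \<bullet> d \<le> norm (Dh (x + t *\<^sub>R d) - Dh x) * norm d"
        by (rule norm_cauchy_schwarz)
      also have "\<dots> \<le> (L * (t * norm d)) * norm d"
        using lipschitz[of "x + t *\<^sub>R d" x] t by (intro mult_right_mono) auto
      finally show ?thesis by (simp add: power2_eq_square algebra_simps)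
    qed
    ultimately show "\<exists>y. (\<phi> has_real_derivative y) (at t) \<and> y \<le> 0" by force
  qed simp
  then show ?thesis unfolding \<phi>_def d_def by simp
qed

lemma convex_lipschitz_gradient_three_point:
  fixes h :: "'a::real_inner \<Rightarrow> real" and Dh :: "'a \<Rightarrow> 'a"
  assumes "convex_on UNIV h"
    and "\<And>y. (h has_derivative (\<lambda>v. Dh y \<bullet> v)) (at y)"
    and "\<And>y z. norm (Dh y - Dh z) \<le> L * norm (y - z)"
  shows "h y \<le> h z + Dh x \<bullet> (y - z) + L / 2 * (norm (y - x))\<^sup>2"
  using lipschitz_gradient_descent_lemma[OF assms(2,3), of y x]
    convex_on_ge_linearization[OF assms(1) assms(2)[of x], of z]
  by (simp add: inner_diff_right)

lemma linear_coeff_zero_if_nonneg_quadratic: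
  fixes a b :: real
  assumes nonneg: "\<And>t. 0 \<le> t * a + t\<^sup>2 * b"
  shows "a = 0"
proof (rule ccontr)
  assume "a \<noteq> 0"
  define c where "c = 2 * \<bar>b\<bar> + 1"
  have c: "c > 0" "b - c < 0" unfolding c_def by auto
  have "(- a / c) * a + (- a / c)\<^sup>2 * b = a\<^sup>2 * (b - c) / c\<^sup>2"
    using c by (simp add: field_simps power2_eq_square)
  also have "\<dots> < 0"
    using \<open>a \<noteq> 0\<close> c by (intro divide_neg_pos mult_pos_neg) auto
  finally show False using nonneg[of "- a / c"] by linarith
qed

lemma linear_term_zero_if_nonneg_with_quadratic:
  fixes c :: "'a::real_inner"
  assumes nonneg: "\<And>v. 0 \<le> c \<bullet> v + Q v"
    and homogeneous: "\<And>t v. Q (t *\<^sub>R v) = t\<^sup>2 * Q v"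
  shows "c = 0"
proof -
  have "0 \<le> t * (c \<bullet> c) + t\<^sup>2 * Q c" for t
    using nonneg[of "t *\<^sub>R c"] by (simp add: homogeneous)
  then have "c \<bullet> c = 0" by (rule linear_coeff_zero_if_nonneg_quadratic)
  then show ?thesis by simp
qed

lemma inner_vector_matrix_mult: "v \<bullet> (y v* A) = y \<bullet> (A *v v)"
  for A :: "real^'n^'m"
  by (metis inner_commute dot_lmul_matrix)

lemma matrix_inv_eq:
  fixes A B :: "'a::semiring_1^'n^'n"
  assumes AB: "A ** B = mat 1" and BA: "B ** A = mat 1"
  shows "matrix_inv A = B"
proof -
  have "A ** matrix_inv A = mat 1"
    unfolding matrix_inv_def by (rule someI2[where a = B]) (use AB BA in auto)
  then have "B ** (A ** matrix_inv A) = B" by simp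
  then show ?thesis by (simp add: matrix_mul_assoc BA)
qed

lemma matrix_inv_scaleR_mat1:
  assumes "c \<noteq> 0"
  shows "matrix_inv (c *\<^sub>R (mat 1 :: real^'n^'n)) = (1 / c) *\<^sub>R mat 1"
  using assms by (intro matrix_inv_eq) (simp_all add: matrix_scalar_ac flip: scalar_matrix_assoc)

lemma scaleR_mat1_mult_vector: "(c *\<^sub>R (mat 1 :: real^'n^'n)) *v v = c *\<^sub>R v"
  by (simp flip: scaleR_matrix_vector_assoc)

lemma wnorm2_scaleR_mat1: "wnorm2 (c *\<^sub>R mat 1) v = c * (v \<bullet> v)"
  unfolding wnorm2_def scaleR_mat1_mult_vector by simp

subsection \<open>Gradient of the compositional objective\<close>

definition grad_Fi :: "nat \<Rightarrow> (nat \<Rightarrow> real^'r \<Rightarrow> real^'r) \<Rightarrow> (nat \<Rightarrow> real^'q \<Rightarrow> real^'r)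
    \<Rightarrow> (nat \<Rightarrow> real^'q \<Rightarrow> real^'q^'r) \<Rightarrow> nat \<Rightarrow> real^'q \<Rightarrow> real^'q" where
  "grad_Fi m Df g Dg i y = (1 / real m) *\<^sub>R (\<Sum>j = 1..m. transpose (Dg j y) *v Df i (gavg m g y))"

lemma gradF_eq_average_grad_Fi:
  "gradF n m Df g Dg y = (1 / real n) *\<^sub>R (\<Sum>i = 1..n. grad_Fi m Df g Dg i y)"
  unfolding gradF_def grad_Fi_def ..

lemma has_derivative_Fi:
  fixes g :: "nat \<Rightarrow> real^'q \<Rightarrow> real^'r" and Dg :: "nat \<Rightarrow> real^'q \<Rightarrow> real^'q^'r"
  assumes g_deriv: "\<And>j y. j \<in> {1..m} \<Longrightarrow> (g j has_derivative (\<lambda>h. Dg j y *v h)) (at y)"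
    and f_deriv: "\<And>z. (f i has_derivative (\<lambda>h. Df i z \<bullet> h)) (at z)"
  shows "((\<lambda>y. f i (gavg m g y)) has_derivative (\<lambda>h. grad_Fi m Df g Dg i y \<bullet> h)) (at y)"
proof -
  have "(gavg m g has_derivative (\<lambda>h. (1 / real m) *\<^sub>R (\<Sum>j = 1..m. Dg j y *v h))) (at y)"
    unfolding gavg_def[abs_def]
    by (intro has_derivative_scaleR_right has_derivative_sum g_deriv) auto
  from has_derivative_compose[OF this f_deriv]
  show ?thesis
    by (simp add: grad_Fi_def inner_sum_left inner_sum_right dot_lmul_matrix)
qed

lemma has_derivative_Fobj:
  fixes g :: "nat \<Rightarrow> real^'q \<Rightarrow> real^'r" and Dg :: "nat \<Rightarrow> real^'q \<Rightarrow> real^'q^'r"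
  assumes "\<And>j y. j \<in> {1..m} \<Longrightarrow> (g j has_derivative (\<lambda>h. Dg j y *v h)) (at y)"
    and "\<And>i z. i \<in> {1..n} \<Longrightarrow> (f i has_derivative (\<lambda>h. Df i z \<bullet> h)) (at z)"
  shows "(Fobj n m f g has_derivative (\<lambda>h. gradF n m Df g Dg y \<bullet> h)) (at y)"
proof -
  have "((\<lambda>y. (1 / real n) * (\<Sum>i = 1..n. f i (gavg m g y))) has_derivative
      (\<lambda>h. (1 / real n) * (\<Sum>i = 1..n. grad_Fi m Df g Dg i y \<bullet> h))) (at y)"
    by (intro has_derivative_mult_right has_derivative_sum has_derivative_Fi assms) auto
  then show ?thesis
    unfolding Fobj_def[abs_def] gradF_eq_average_grad_Fi by (simp add: inner_sum_left)
qed

lemma norm_average_diff_le: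
  fixes u v :: "nat \<Rightarrow> 'a::real_normed_vector"
  assumes "N \<ge> 1" and "\<And>i. i \<in> {1..N} \<Longrightarrow> norm (u i - v i) \<le> C"
  shows "norm ((1 / real N) *\<^sub>R (\<Sum>i = 1..N. u i) - (1 / real N) *\<^sub>R (\<Sum>i = 1..N. v i)) \<le> C"
proof -
  have "norm ((1 / real N) *\<^sub>R (\<Sum>i = 1..N. u i) - (1 / real N) *\<^sub>R (\<Sum>i = 1..N. v i))
      = (1 / real N) * norm (\<Sum>i = 1..N. u i - v i)"
    by (simp add: sum_subtractf flip: scaleR_diff_right)
  also have "\<dots> \<le> (1 / real N) * (\<Sum>i = 1..N. C)"
    by (intro mult_left_mono order.trans[OF norm_sum] sum_mono assms(2)) auto
  also have "\<dots> = C" using assms(1) by simp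
  finally show ?thesis .
qed

lemma gradF_lipschitz:
  fixes g :: "nat \<Rightarrow> real^'q \<Rightarrow> real^'r" and Dg :: "nat \<Rightarrow> real^'q \<Rightarrow> real^'q^'r"
  assumes "n \<ge> 1" "m \<ge> 1"
    and lipschitz: "\<And>i j y z. i \<in> {1..n} \<Longrightarrow> j \<in> {1..m} \<Longrightarrow>
        norm (transpose (Dg j y) *v Df i (gavg m g y) - transpose (Dg j z) *v Df i (gavg m g z))
          \<le> L * norm (y - z)"
  shows "norm (gradF n m Df g Dg y - gradF n m Df g Dg z) \<le> L * norm (y - z)"
  unfolding gradF_eq_average_grad_Fi
proof (rule norm_average_diff_le[OF \<open>n \<ge> 1\<close>])
  fix i assume "i \<in> {1..n}"
  then show "norm (grad_Fi m Df g Dg i y - grad_Fi m Df g Dg i z) \<le> L * norm (y - z)"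
    unfolding grad_Fi_def by (intro norm_average_diff_le \<open>m \<ge> 1\<close> lipschitz)
qed

lemma convex_on_Fobj:
  assumes "\<And>i. i \<in> {1..n} \<Longrightarrow> convex_on UNIV (\<lambda>y. f i (gavg m g y))"
  shows "convex_on UNIV (Fobj n m f g)"
  unfolding Fobj_def[abs_def]
  by (intro convex_on_cmul convex_on_sum_fun assms) auto

subsection \<open>One linearised proximal ADMM step\<close>

lemma linearized_admm_x_step_closed_form:
  fixes A :: "real^'q^'p" and B :: "real^'l^'p"
  assumes minimal: "\<And>u.
        gh \<bullet> (x1 - x0) + l0 \<bullet> (A *v x1) + \<rho> / 2 * (norm (A *v x1 + B *v w))\<^sup>2
          + 1 / (2 * \<eta>) * wnorm2 (\<gamma> *\<^sub>R mat 1) (x1 - x0)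
        \<le> gh \<bullet> (u - x0) + l0 \<bullet> (A *v u) + \<rho> / 2 * (norm (A *v u + B *v w))\<^sup>2
          + 1 / (2 * \<eta>) * wnorm2 (\<gamma> *\<^sub>R mat 1) (u - x0)"
  shows "gh + transpose A *v (l0 + \<rho> *\<^sub>R (A *v x1 + B *v w)) = (\<gamma> / \<eta>) *\<^sub>R (x0 - x1)"
proof -
  define c where "c = gh + transpose A *v (l0 + \<rho> *\<^sub>R (A *v x1 + B *v w)) + (\<gamma> / \<eta>) *\<^sub>R (x1 - x0)"
  define Q where "Q v = \<rho> / 2 * ((A *v v) \<bullet> (A *v v)) + \<gamma> / (2 * \<eta>) * (v \<bullet> v)" for v
  have "0 \<le> c \<bullet> v + Q v" for v
  proof -
    have "gh \<bullet> ((x1 + v) - x0) + l0 \<bullet> (A *v (x1 + v)) + \<rho> / 2 * (norm (A *v (x1 + v) + B *v w))\<^sup>2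
          + 1 / (2 * \<eta>) * wnorm2 (\<gamma> *\<^sub>R mat 1) ((x1 + v) - x0)
        = (gh \<bullet> (x1 - x0) + l0 \<bullet> (A *v x1) + \<rho> / 2 * (norm (A *v x1 + B *v w))\<^sup>2
          + 1 / (2 * \<eta>) * wnorm2 (\<gamma> *\<^sub>R mat 1) (x1 - x0)) + (c \<bullet> v + Q v)"
      unfolding wnorm2_scaleR_mat1 c_def Q_def power2_norm_eq_inner
      by (simp add: dot_lmul_matrix inner_vector_matrix_mult inner_commute inner_add_left inner_add_right
          inner_diff_left inner_diff_right matrix_vector_right_distrib matrix_vector_mult_scaleR
          algebra_simps add_divide_distrib diff_divide_distrib)
    then show ?thesis using minimal[of "x1 + v"] by linarith
  qed
  moreover have "Q (t *\<^sub>R v) = t\<^sup>2 * Q v" for t v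
    unfolding Q_def by (simp add: matrix_vector_mult_scaleR power2_eq_square algebra_simps)
  ultimately have "c = 0" by (rule linear_term_zero_if_nonneg_with_quadratic)
  then show ?thesis unfolding c_def by (simp add: algebra_simps)
qed

lemma proximal_step_inequality:
  fixes x0 x1 xs gh D a :: "'a::real_inner"
  assumes step: "gh + a = (\<gamma> / \<eta>) *\<^sub>R (x0 - x1)"
    and smooth: "F1 \<le> Fs + D \<bullet> (x1 - xs) + L / 2 * (norm (x1 - x0))\<^sup>2"
    and pos: "\<eta> > 0" "\<gamma> > 0" and dominated: "\<eta> * L \<le> \<gamma>"
  shows "- 2 * \<eta> * ((gh + a) \<bullet> (x0 - xs)) + \<eta>\<^sup>2 * (1 / \<gamma> * ((gh + a) \<bullet> (gh + a)))
    \<le> - 2 * \<eta> * (F1 - Fs) - 2 * \<eta> * ((gh - D) \<bullet> (x1 - xs)) + 2 * \<eta> * (a \<bullet> (xs - x1))"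
proof -
  define d where "d = x0 - x1"
  define p where "p = d \<bullet> d"
  define q where "q = d \<bullet> (x1 - xs)"
  have "(gh + a) \<bullet> (x0 - xs) = (\<gamma> / \<eta>) * (p + q)"
    unfolding step d_def[symmetric] p_def q_def by (simp add: d_def inner_diff_right algebra_simps)
  then have lhs: "- 2 * \<eta> * ((gh + a) \<bullet> (x0 - xs)) + \<eta>\<^sup>2 * (1 / \<gamma> * ((gh + a) \<bullet> (gh + a)))
      = - \<gamma> * p - 2 * \<gamma> * q"
    using pos unfolding step d_def[symmetric] p_def
    by (simp add: power2_eq_square field_simps)
  have gh: "gh = (\<gamma> / \<eta>) *\<^sub>R d - a" using step unfolding d_def by (simp add: algebra_simps)
  have rhs: "- 2 * \<eta> * (F1 - Fs) - 2 * \<eta> * ((gh - D) \<bullet> (x1 - xs)) + 2 * \<eta> * (a \<bullet> (xs - x1))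
      = - 2 * \<eta> * (F1 - Fs - D \<bullet> (x1 - xs)) - 2 * \<gamma> * q"
    using pos unfolding gh q_def by (simp add: inner_add_left inner_diff_left inner_diff_right field_simps)
  have "(norm (x1 - x0))\<^sup>2 = p"
    unfolding p_def d_def power2_norm_eq_inner by (simp add: inner_commute inner_diff_left inner_diff_right)
  then have "F1 - Fs - D \<bullet> (x1 - xs) \<le> L / 2 * p" using smooth by simp
  then have "2 * \<eta> * (F1 - Fs - D \<bullet> (x1 - xs)) \<le> 2 * \<eta> * (L / 2 * p)"
    using pos by (intro mult_left_mono) auto
  also have "\<dots> = (\<eta> * L) * p" by simp
  also have "\<dots> \<le> \<gamma> * p" unfolding p_def using dominated by (intro mult_right_mono) auto
  finally show ?thesis unfolding lhs rhs by linarith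
qed

theorem lemma7:
  fixes n m S K :: nat and \<rho> LF :: real
    and g :: "nat \<Rightarrow> real^'q \<Rightarrow> real^'r" and Dg :: "nat \<Rightarrow> real^'q \<Rightarrow> real^'q^'r"
    and f :: "nat \<Rightarrow> real^'r \<Rightarrow> real" and Df :: "nat \<Rightarrow> real^'r \<Rightarrow> real^'r"
    and R :: "real^'l \<Rightarrow> real" and A :: "real^'q^'p" and B :: "real^'l^'p"
    and xs :: "real^'q" and ws :: "real^'l" and ys :: "real^'p"
    and \<eta> :: "nat \<Rightarrow> real" and gam :: "nat \<Rightarrow> nat \<Rightarrow> real" and G :: "nat \<Rightarrow> nat \<Rightarrow> real^'q^'q"
    and x :: "nat \<Rightarrow> nat \<Rightarrow> real^'q" and w :: "nat \<Rightarrow> nat \<Rightarrow> real^'l"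
    and lam :: "nat \<Rightarrow> nat \<Rightarrow> real^'p" and xt :: "nat \<Rightarrow> real^'q"
    and ii jj :: "nat \<Rightarrow> nat \<Rightarrow> nat"
    and x0 :: "real^'q" and w0 :: "real^'l" and lam0 :: "real^'p"
    and s k :: nat
  assumes n: "n \<ge> 1" and m: "m \<ge> 1" and SK: "S \<ge> 1" "K \<ge> 1" and rho: "\<rho> > 0"
    \<comment> \<open>smoothness of the data\<close>
    and g_deriv: "\<And>j y. j \<in> {1..m} \<Longrightarrow> (g j has_derivative (\<lambda>h. Dg j y *v h)) (at y)"
    and g_cont: "\<And>j. j \<in> {1..m} \<Longrightarrow> continuous_on UNIV (Dg j)"
    and f_deriv: "\<And>i z. i \<in> {1..n} \<Longrightarrow> (f i has_derivative (\<lambda>h. Df i z \<bullet> h)) (at z)"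
    and f_cont: "\<And>i. i \<in> {1..n} \<Longrightarrow> continuous_on UNIV (Df i)"
    \<comment> \<open>(A1)\<close>
    and F_conv: "\<And>i. i \<in> {1..n} \<Longrightarrow> convex_on UNIV (\<lambda>y. f i (gavg m g y))"
    and R_conv: "convex_on UNIV R"
    and opt: "opt_pd (Fobj n m f g) R A B xs ws ys"
    and bdd: "bounded ({x s' k' | s' k'. s' \<in> {1..S} \<and> k' \<le> K} \<union> xt ` {0..S})"
    \<comment> \<open>(A4)\<close>
    and LF: "LF > 0"
    and A4: "\<And>i j y z. i \<in> {1..n} \<Longrightarrow> j \<in> {1..m} \<Longrightarrow>
        norm (transpose (Dg j y) *v Df i (gavg m g y) - transpose (Dg j z) *v Df i (gavg m g z))
          \<le> LF * norm (y - z)"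
    \<comment> \<open>parameter choice (P1)\<close>
    and eta: "\<And>s'. \<eta> s' = 1 / ((real s' + 1) * LF)"
    and Gscal: "\<And>s' k'. G s' k' = gam s' k' *\<^sub>R mat 1"
    and gam0: "\<And>s'. s' \<in> {1..S} \<Longrightarrow> gam s' 0 = 1 / real s'"
    and gamK: "\<And>s'. s' \<in> {1..S} \<Longrightarrow> gam s' (K - 1) = 1 / (real s' + 1) \<and> gam s' K = 1 / (real s' + 1)"
    and gam_mono: "\<And>s' k1 k2. s' \<in> {1..S} \<Longrightarrow> k1 \<le> k2 \<Longrightarrow> k2 \<le> K \<Longrightarrow> gam s' k2 \<le> gam s' k1"
    \<comment> \<open>Algorithm 2: initialisation and passing between stages\<close>
    and init: "xt 0 = x0" "x 1 0 = x0" "w 1 0 = w0" "lam 1 0 = lam0" "G 1 0 = mat 1"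
    and pass: "\<And>s'. 2 \<le> s' \<Longrightarrow> s' \<le> S \<Longrightarrow>
        x s' 0 = x (s' - 1) K \<and> w s' 0 = w (s' - 1) K \<and> lam s' 0 = lam (s' - 1) K
        \<and> G s' 0 = G (s' - 1) K"
    and snap: "\<And>s'. s' \<in> {1..S} \<Longrightarrow> xt s' = (1 / real K) *\<^sub>R (\<Sum>k' = 1..K. x s' k')"
    \<comment> \<open>Algorithm 2: inner iterations (a)--(e)\<close>
    and step_a: "\<And>s' k' v. s' \<in> {1..S} \<Longrightarrow> k' < K \<Longrightarrow>
        R (w s' (Suc k')) + lam s' k' \<bullet> (B *v w s' (Suc k'))
          + \<rho> / 2 * (norm (A *v x s' k' + B *v w s' (Suc k')))\<^sup>2
        \<le> R v + lam s' k' \<bullet> (B *v v) + \<rho> / 2 * (norm (A *v x s' k' + B *v v))\<^sup>2"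
    and step_c: "\<And>s' k'. s' \<in> {1..S} \<Longrightarrow> k' < K \<Longrightarrow> ii s' k' \<in> {1..n} \<and> jj s' k' \<in> {1..m}"
    and step_d: "\<And>s' k' u. s' \<in> {1..S} \<Longrightarrow> k' < K \<Longrightarrow>
        gradest n m Df g Dg (ii s' k') (jj s' k') (xt (s' - 1)) (x s' k') \<bullet> (x s' (Suc k') - x s' k')
          + lam s' k' \<bullet> (A *v x s' (Suc k'))
          + \<rho> / 2 * (norm (A *v x s' (Suc k') + B *v w s' (Suc k')))\<^sup>2
          + 1 / (2 * \<eta> s') * wnorm2 (G s' k') (x s' (Suc k') - x s' k')
        \<le> gradest n m Df g Dg (ii s' k') (jj s' k') (xt (s' - 1)) (x s' k') \<bullet> (u - x s' k')
          + lam s' k' \<bullet> (A *v u)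
          + \<rho> / 2 * (norm (A *v u + B *v w s' (Suc k')))\<^sup>2
          + 1 / (2 * \<eta> s') * wnorm2 (G s' k') (u - x s' k')"
    and step_e: "\<And>s' k'. s' \<in> {1..S} \<Longrightarrow> k' < K \<Longrightarrow>
        lam s' (Suc k') = lam s' k' + \<rho> *\<^sub>R (A *v x s' (Suc k') + B *v w s' (Suc k'))"
    \<comment> \<open>the iteration under consideration\<close>
    and s: "s \<in> {1..S}" and k: "k < K"
  shows "let gh = gradest n m Df g Dg (ii s k) (jj s k) (xt (s - 1)) (x s k);
             \<mu> = gh + transpose A *v lam s (Suc k)
         in x s (Suc k) = x s k - \<eta> s *\<^sub>R (matrix_inv (G s k) *v \<mu>) \<and>
            - 2 * \<eta> s * (\<mu> \<bullet> (x s k - xs)) + (\<eta> s)\<^sup>2 * wnorm2 (matrix_inv (G s k)) \<mu>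
            \<le> - 2 * \<eta> s * (Fobj n m f g (x s (Suc k)) - Fobj n m f g xs)
              - 2 * \<eta> s * ((gh - gradF n m Df g Dg (x s k)) \<bullet> (x s (Suc k) - xs))
              + 2 * \<eta> s * ((transpose A *v lam s (Suc k)) \<bullet> (xs - x s (Suc k)))"
proof -
  define \<gamma> where "\<gamma> = gam s k"
  define gh where "gh = gradest n m Df g Dg (ii s k) (jj s k) (xt (s - 1)) (x s k)"
  define \<mu> where "\<mu> = gh + transpose A *v lam s (Suc k)"
  have "1 / (real s + 1) \<le> \<gamma>"
    using gam_mono[OF s, of k K] gamK[OF s] k unfolding \<gamma>_def by simp
  moreover have \<eta>_LF: "\<eta> s * LF = 1 / (real s + 1)" and "\<eta> s > 0"
    using LF by (simp_all add: eta)
  ultimately have "\<gamma> > 0" and dominated: "\<eta> s * LF \<le> \<gamma>"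
    by (smt (verit) divide_pos_pos of_nat_0_le_iff)+
  have G: "G s k = \<gamma> *\<^sub>R mat 1" unfolding \<gamma>_def by (rule Gscal)
  have step: "\<mu> = (\<gamma> / \<eta> s) *\<^sub>R (x s k - x s (Suc k))"
    unfolding \<mu>_def step_e[OF s k] gh_def
    by (rule linearized_admm_x_step_closed_form) (use step_d[OF s k] G in simp)
  have smooth: "Fobj n m f g (x s (Suc k)) \<le> Fobj n m f g xs
      + gradF n m Df g Dg (x s k) \<bullet> (x s (Suc k) - xs) + LF / 2 * (norm (x s (Suc k) - x s k))\<^sup>2"
    by (intro convex_lipschitz_gradient_three_point convex_on_Fobj F_conv
        has_derivative_Fobj g_deriv f_deriv gradF_lipschitz n m A4) auto
  have inv_G: "matrix_inv (G s k) *v v = (1 / \<gamma>) *\<^sub>R v" for v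
    unfolding G matrix_inv_scaleR_mat1[OF \<open>\<gamma> > 0\<close>[THEN less_imp_neq, symmetric]]
    by (rule scaleR_mat1_mult_vector)
  have "x s (Suc k) = x s k - \<eta> s *\<^sub>R (matrix_inv (G s k) *v \<mu>)"
    using \<open>\<eta> s > 0\<close> \<open>\<gamma> > 0\<close> by (simp add: inv_G step)
  moreover have "wnorm2 (matrix_inv (G s k)) \<mu> = 1 / \<gamma> * (\<mu> \<bullet> \<mu>)"
    unfolding wnorm2_def inv_G by simp
  ultimately show ?thesis
    using proximal_step_inequality[OF step[unfolded \<mu>_def] smooth \<open>\<eta> s > 0\<close> \<open>\<gamma> > 0\<close> dominated]
    unfolding Let_def gh_def[symmetric] \<mu>_def[symmetric] by simp
qed

end
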